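(* Let $A\in\mathcal{PM}(n)$ have row vectors $r_0,\ldots,r_{n-1}$. A poset vector $v$ of $A$ is join-irreducible if and only if $v=r_i$ for some $i\in X_n$.
   Context: Let $X_n=\{0,1,\ldots,n-1\}$. A naturally labeled (NL) poset on $X_n$ is a partial order $\preceq$ on $X_n$ such that $x\preceq y$ implies $x\le y$ in the usual integer order. Its poset matrix is the $n\times n$ $(0,1)$-matrix $A=(a_{i,j})_{i,j\in X_n}$ with $a_{i,j}=1$ if $j\preceq i$ and $0$ otherwise; $\mathcal{PM}(n)$ is the set of all such matrices. Arithmetic is Boolean ($1+1=1$, vector sum entrywise). For $v\in\{0,1\}^n$, $A^v=\begin{bmatrix}A&\mathbf{0}\\ v&1\end{bmatrix}$, and $v$ is a poset vector of $A$ if $A^v\in\mathcal{PM}(n+1)$. A poset vector $v$ is join-irreducible if $v\neq\mathbf 0$ and, whenever $v=u+w$ with $u,w$ poset vectors of $A$, one has $v=u$ or $v=w$. *)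

theory Defs
  imports Main
begin

text \<open>An n x n (0,1)-matrix is represented as a function A :: nat => nat => bool,
  where only the entries A i j with i, j < n are relevant (A i j = True means a_{i,j} = 1).\<close>

text \<open>Poset matrix of an NL poset on X_n: a_{i,j} = 1 iff j precedes-or-equals i.
  The relation is reflexive, antisymmetric, transitive, and natural (j \<preceq> i implies j \<le> i).\<close>
definition is_PM :: "nat \<Rightarrow> (nat \<Rightarrow> nat \<Rightarrow> bool) \<Rightarrow> bool" where
  "is_PM n A \<longleftrightarrow>
     (\<forall>i<n. A i i) \<and>
     (\<forall>i<n. \<forall>j<n. A i j \<and> A j i \<longrightarrow> i = j) \<and>
     (\<forall>i<n. \<forall>j<n. \<forall>k<n. A i j \<and> A j k \<longrightarrow> A i k) \<and>
     (\<forall>i<n. \<forall>j<n. A i j \<longrightarrow> j \<le> i)"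

definition ext_mat :: "nat \<Rightarrow> (nat \<Rightarrow> nat \<Rightarrow> bool) \<Rightarrow> bool list \<Rightarrow> nat \<Rightarrow> nat \<Rightarrow> bool" where
  "ext_mat n A v i j =
     (if i < n \<and> j < n then A i j
      else if i = n \<and> j < n then v ! j
      else i = n \<and> j = n)"

definition poset_vec :: "nat \<Rightarrow> (nat \<Rightarrow> nat \<Rightarrow> bool) \<Rightarrow> bool list \<Rightarrow> bool" where
  "poset_vec n A v \<longleftrightarrow> length v = n \<and> is_PM (Suc n) (ext_mat n A v)"

definition vsum :: "bool list \<Rightarrow> bool list \<Rightarrow> bool list" where
  "vsum u w = map2 (\<or>) u w"

definition join_irreducible :: "nat \<Rightarrow> (nat \<Rightarrow> nat \<Rightarrow> bool) \<Rightarrow> bool list \<Rightarrow> bool" where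
  "join_irreducible n A v \<longleftrightarrow>
     v \<noteq> replicate n False \<and>
     (\<forall>u w. poset_vec n A u \<longrightarrow> poset_vec n A w \<longrightarrow> v = vsum u w \<longrightarrow> v = u \<or> v = w)"

definition row :: "nat \<Rightarrow> (nat \<Rightarrow> nat \<Rightarrow> bool) \<Rightarrow> nat \<Rightarrow> bool list" where
  "row n A i = map (\<lambda>j. A i j) [0..<n]"

end

theory Submission
  imports Defs
begin

text \<open>Poset vectors of A are the indicator vectors of the down-sets of the poset, and the row r_i
  is the indicator vector of the principal down-set of i. A row is join-irreducible because whichever
  summand contains i already contains the whole row. Conversely, let v be a nonzero down-set with
  largest element i. By natural labelling i is maximal in v, so v with i removed is again a
  down-set, and v is the join of it and r_i; irreducibility forces v = r_i.\<close>

text \<open>Since A j k means k \<preceq> j, this says that the support of v is a down-set of the poset.\<close>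

definition is_down_set :: "nat \<Rightarrow> (nat \<Rightarrow> nat \<Rightarrow> bool) \<Rightarrow> bool list \<Rightarrow> bool" where
  "is_down_set n A v \<longleftrightarrow> (\<forall>j<n. \<forall>k<n. v ! j \<and> A j k \<longrightarrow> v ! k)"

lemma is_down_setD: "is_down_set n A v \<Longrightarrow> j < n \<Longrightarrow> k < n \<Longrightarrow> v ! j \<Longrightarrow> A j k \<Longrightarrow> v ! k"
  unfolding is_down_set_def by blast

lemma is_PMI:
  assumes "\<And>i. i < n \<Longrightarrow> B i i"
    and "\<And>i j. i < n \<Longrightarrow> j < n \<Longrightarrow> B i j \<Longrightarrow> B j i \<Longrightarrow> i = j"
    and "\<And>i j k. i < n \<Longrightarrow> j < n \<Longrightarrow> k < n \<Longrightarrow> B i j \<Longrightarrow> B j k \<Longrightarrow> B i k"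
    and "\<And>i j. i < n \<Longrightarrow> j < n \<Longrightarrow> B i j \<Longrightarrow> j \<le> i"
  shows "is_PM n B"
  using assms unfolding is_PM_def by blast

lemma is_PM_refl: "is_PM n B \<Longrightarrow> i < n \<Longrightarrow> B i i"
  unfolding is_PM_def by blast

lemma is_PM_antisym: "is_PM n B \<Longrightarrow> i < n \<Longrightarrow> j < n \<Longrightarrow> B i j \<Longrightarrow> B j i \<Longrightarrow> i = j"
  unfolding is_PM_def by blast

lemma is_PM_trans:
  "is_PM n B \<Longrightarrow> i < n \<Longrightarrow> j < n \<Longrightarrow> k < n \<Longrightarrow> B i j \<Longrightarrow> B j k \<Longrightarrow> B i k"
  unfolding is_PM_def by blast

lemma is_PM_natural: "is_PM n B \<Longrightarrow> i < n \<Longrightarrow> j < n \<Longrightarrow> B i j \<Longrightarrow> j \<le> i"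
  unfolding is_PM_def by blast

lemma is_PM_mono:
  assumes "is_PM n B" and "m \<le> n"
  shows "is_PM m B"
proof (rule is_PMI)
  have lt: "i < n" if "i < m" for i
    using that \<open>m \<le> n\<close> by simp
  show "B i i" if "i < m" for i
    using is_PM_refl[OF assms(1) lt[OF that]] .
  show "i = j" if "i < m" "j < m" "B i j" "B j i" for i j
    using is_PM_antisym[OF assms(1) lt[OF that(1)] lt[OF that(2)] that(3,4)] .
  show "B i k" if "i < m" "j < m" "k < m" "B i j" "B j k" for i j k
    using is_PM_trans[OF assms(1) lt[OF that(1)] lt[OF that(2)] lt[OF that(3)] that(4,5)] .
  show "j \<le> i" if "i < m" "j < m" "B i j" for i j
    using is_PM_natural[OF assms(1) lt[OF that(1)] lt[OF that(2)] that(3)] .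
qed

lemma is_PM_Suc_iff:
  "is_PM (Suc n) B \<longleftrightarrow>
     is_PM n B \<and> B n n \<and> (\<forall>j<n. \<not> B j n) \<and> (\<forall>j<n. \<forall>k<n. B n j \<and> B j k \<longrightarrow> B n k)"
  (is "?lhs \<longleftrightarrow> ?rhs")
proof
  assume ?lhs
  have "is_PM n B"
    using is_PM_mono[OF \<open>?lhs\<close>] by simp
  moreover have "B n n"
    using is_PM_refl[OF \<open>?lhs\<close>] by simp
  moreover have "\<not> B j n" if "j < n" for j
    using is_PM_natural[OF \<open>?lhs\<close>, of j n] that by fastforce
  moreover have "B n k" if "j < n" "k < n" "B n j" "B j k" for j k
    using is_PM_trans[OF \<open>?lhs\<close>, of n j k] that by simp
  ultimately show ?rhs
    by blast
next
  assume ?rhs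
  then have PM: "is_PM n B" and "B n n" and below: "\<And>j. j < n \<Longrightarrow> \<not> B j n"
    and top_trans: "\<And>j k. j < n \<Longrightarrow> k < n \<Longrightarrow> B n j \<Longrightarrow> B j k \<Longrightarrow> B n k"
    by blast+
  have shape: "i = n \<or> i < n \<and> j < n" if "i < Suc n" "j < Suc n" "B i j" for i j
    using below that less_antisym by blast
  show ?lhs
  proof (rule is_PMI)
    show "B i i" if "i < Suc n" for i
      using is_PM_refl[OF PM, of i] \<open>B n n\<close> that less_antisym by blast
    show "i = j" if "i < Suc n" "j < Suc n" "B i j" "B j i" for i j
      using shape[of i j] shape[of j i] is_PM_antisym[OF PM, of i j] that by blast
    show "B i k" if "i < Suc n" "j < Suc n" "k < Suc n" "B i j" "B j k" for i j k
      using shape[of i j] shape[of j k] is_PM_trans[OF PM, of i j k] top_trans[of j k] that by blast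
    show "j \<le> i" if "i < Suc n" "j < Suc n" "B i j" for i j
      using shape[of i j] is_PM_natural[OF PM, of i j] that by fastforce
  qed
qed

lemma is_PM_cong:
  assumes "\<And>i j. i < n \<Longrightarrow> j < n \<Longrightarrow> B i j = C i j"
  shows "is_PM n B = is_PM n C"
  using assms by (simp add: is_PM_def)

lemma poset_vec_iff:
  "poset_vec n A v \<longleftrightarrow> length v = n \<and> is_PM n A \<and> is_down_set n A v"
proof -
  have "is_PM n (ext_mat n A v) = is_PM n A"
    by (rule is_PM_cong) (simp add: ext_mat_def)
  then show ?thesis
    unfolding poset_vec_def is_PM_Suc_iff is_down_set_def by (auto simp: ext_mat_def)
qed

lemma length_row [simp]: "length (row n A i) = n"
  by (simp add: row_def)

lemma nth_row [simp]: "k < n \<Longrightarrow> row n A i ! k = A i k"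
  by (simp add: row_def)

lemma length_vsum [simp]: "length (vsum u w) = min (length u) (length w)"
  by (simp add: vsum_def)

lemma nth_vsum [simp]:
  "k < length u \<Longrightarrow> k < length w \<Longrightarrow> vsum u w ! k = (u ! k \<or> w ! k)"
  by (simp add: vsum_def)

lemma poset_vec_row:
  assumes "is_PM n A" and "i < n"
  shows "poset_vec n A (row n A i)"
proof -
  have row_closed: "A i k" if "j < n" "k < n" "A i j" "A j k" for j k
    using is_PM_trans[OF assms that] .
  show ?thesis
    unfolding poset_vec_iff is_down_set_def by (auto intro: assms(1) row_closed)
qed

lemma poset_vec_eq_row:
  assumes "poset_vec n A x" and "i < n" and "x ! i"
    and below_row: "\<And>k. k < n \<Longrightarrow> x ! k \<Longrightarrow> A i k"
  shows "x = row n A i"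
proof (rule nth_equalityI)
  have "length x = n" and "is_down_set n A x"
    using assms(1) by (simp_all add: poset_vec_iff)
  then show "length x = length (row n A i)"
    by simp
  show "x ! k = row n A i ! k" if "k < length x" for k
    using is_down_setD[OF \<open>is_down_set n A x\<close> \<open>i < n\<close> _ \<open>x ! i\<close>] below_row that \<open>length x = n\<close>
    by auto
qed

lemma join_irreducible_row:
  assumes "is_PM n A" and "i < n"
  shows "join_irreducible n A (row n A i)"
  unfolding join_irreducible_def
proof (intro conjI allI impI)
  have "A i i"
    using is_PM_refl[OF assms] .
  then show "row n A i \<noteq> replicate n False"
    using \<open>i < n\<close> by (metis nth_replicate nth_row)
  fix u w
  assume u: "poset_vec n A u" and w: "poset_vec n A w" and sum: "row n A i = vsum u w"
  have "length u = n" and "length w = n"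
    using u w by (simp_all add: poset_vec_iff)
  then have row_eq: "A i k = (u ! k \<or> w ! k)" if "k < n" for k
    using arg_cong[where f = "\<lambda>x. x ! k", OF sum] that by simp
  then have "u ! i \<or> w ! i"
    using \<open>A i i\<close> \<open>i < n\<close> by blast
  then show "row n A i = u \<or> row n A i = w"
    using poset_vec_eq_row[OF u \<open>i < n\<close>] poset_vec_eq_row[OF w \<open>i < n\<close>] row_eq by metis
qed

lemma obtain_max_True_index:
  assumes "v \<noteq> replicate (length v) False"
  obtains i where "i < length v" and "v ! i" and "\<And>k. k < length v \<Longrightarrow> v ! k \<Longrightarrow> k \<le> i"
proof -
  let ?S = "{k. k < length v \<and> v ! k}"
  have "?S \<noteq> {}"
    using assms by (simp add: list_eq_iff_nth_eq)
  have "finite ?S"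
    by simp
  have "Max ?S \<in> ?S"
    using Max_in[OF \<open>finite ?S\<close> \<open>?S \<noteq> {}\<close>] .
  moreover have "k \<le> Max ?S" if "k \<in> ?S" for k
    using Max_ge[OF \<open>finite ?S\<close> that] .
  ultimately show thesis
    using that by blast
qed

lemma nth_update_False:
  "i < length v \<Longrightarrow> v[i := False] ! k = (k \<noteq> i \<and> v ! k)"
  by (cases "k = i") simp_all

lemma poset_vec_remove_max:
  assumes "poset_vec n A v" and "i < n" and max: "\<And>k. k < n \<Longrightarrow> v ! k \<Longrightarrow> k \<le> i"
  shows "poset_vec n A (v[i := False])"
proof -
  have len: "length v = n" and PM: "is_PM n A" and down: "is_down_set n A v"
    using assms(1) by (simp_all add: poset_vec_iff)
  have closed: "v[i := False] ! k"
    if "j < n" "k < n" "v[i := False] ! j" "A j k" for j k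
  proof -
    have "v ! j" and "j < i"
      using that(1,3) max[of j] nth_update_False[of i v j] len \<open>i < n\<close> by auto
    moreover have "k \<le> j"
      using is_PM_natural[OF PM that(1,2,4)] .
    ultimately show ?thesis
      using is_down_setD[OF down that(1,2) _ that(4)] nth_update_False[of i v k] len \<open>i < n\<close>
      by simp
  qed
  show ?thesis
    unfolding poset_vec_iff is_down_set_def by (auto simp: len PM intro: closed)
qed

lemma vsum_row_update_False:
  assumes "poset_vec n A v" and "i < n" and "v ! i"
  shows "vsum (row n A i) (v[i := False]) = v"
proof (rule nth_equalityI)
  have len: "length v = n" and PM: "is_PM n A" and down: "is_down_set n A v"
    using assms(1) by (simp_all add: poset_vec_iff)
  then show "length (vsum (row n A i) (v[i := False])) = length v"
    by simp
  show "vsum (row n A i) (v[i := False]) ! k = v ! k"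
    if "k < length (vsum (row n A i) (v[i := False]))" for k
    using that len is_PM_refl[OF PM \<open>i < n\<close>] is_down_setD[OF down \<open>i < n\<close> _ \<open>v ! i\<close>]
      nth_update_False[of i v k] \<open>i < n\<close> by auto
qed

theorem theorem5p5:
  fixes n :: nat and A :: "nat \<Rightarrow> nat \<Rightarrow> bool" and v :: "bool list"
  assumes "is_PM n A"
    and "poset_vec n A v"
  shows "join_irreducible n A v \<longleftrightarrow> (\<exists>i<n. v = row n A i)"
proof
  assume irred: "join_irreducible n A v"
  have len: "length v = n"
    using assms(2) by (simp add: poset_vec_iff)
  with irred obtain i where "i < n" "v ! i" and max: "\<And>k. k < n \<Longrightarrow> v ! k \<Longrightarrow> k \<le> i"
    using obtain_max_True_index[of v] by (auto simp: join_irreducible_def)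
  have "v = row n A i \<or> v = v[i := False]"
    using irred poset_vec_row[OF assms(1) \<open>i < n\<close>] poset_vec_remove_max[OF assms(2) \<open>i < n\<close> max]
      vsum_row_update_False[OF assms(2) \<open>i < n\<close> \<open>v ! i\<close>]
    unfolding join_irreducible_def by metis
  moreover have "v \<noteq> v[i := False]"
    using \<open>v ! i\<close> \<open>i < n\<close> len by (metis nth_list_update_eq)
  ultimately show "\<exists>i<n. v = row n A i"
    using \<open>i < n\<close> by blast
next
  assume "\<exists>i<n. v = row n A i"
  then show "join_irreducible n A v"
    using join_irreducible_row[OF assms(1)] by blast
qed

end
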